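(* For every constant $\varepsilon>0$ there exists an online algorithm for $\textsc{Online-Sorting}[1+\varepsilon,n]$ with competitive ratio $2^{O(\sqrt{\log n\,\log\log n})}$, i.e., whose cost on every stream of $n$ reals in $[0,1]$ is at most $2^{O(\sqrt{\log n\log\log n})}$.
   Context: $\textsc{Online-Sorting}[\gamma,n]$ (for $\gamma\ge 1$): there is an array $A$ consisting of $\gamma n$ initially empty cells, ordered from left to right. A stream of $n$ reals $s_1,\dots,s_n\in[0,1]$ arrives one at a time. An online algorithm must place each $s_i$ into an empty cell of $A$, irrevocably, before $s_{i+1}$ is revealed. After all reals are placed, let $r_1,\dots,r_n$ be the reals in left-to-right order in $A$, with $r_0:=0$, $r_{n+1}:=1$; the cost is $\sum_{i=0}^{n}|r_{i+1}-r_i|$. The offline optimum has cost exactly $1$, so an algorithm has competitive ratio $\Delta$ if its cost is at most $\Delta$ on every stream of $n$ reals. *)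

theory Defs
  imports Complex_Main
begin

text \<open>A deterministic online algorithm for Online-Sorting is modelled as a function
  that, given the prefix s_1,...,s_i of the stream seen so far (with s_i the current real),
  returns the index of the cell into which s_i is placed.  Since the algorithm is
  deterministic, the current state of the array is a function of the earlier prefix,
  so this captures every deterministic online algorithm.\<close>

type_synonym online_alg = "real list \<Rightarrow> nat"

definition placement :: "online_alg \<Rightarrow> real list \<Rightarrow> nat list" where
  "placement A s = map (\<lambda>i. A (take (Suc i) s)) [0..<length s]"

definition valid_run :: "nat \<Rightarrow> online_alg \<Rightarrow> real list \<Rightarrow> bool" where
  "valid_run m A s \<longleftrightarrow> distinct (placement A s) \<and> (\<forall>p\<in>set (placement A s). p < m)"

definition arrangement :: "online_alg \<Rightarrow> real list \<Rightarrow> real list" where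
  "arrangement A s = map snd (sort_key fst (zip (placement A s) s))"

definition path_cost :: "real list \<Rightarrow> real" where
  "path_cost r = (let ys = 0 # r @ [1] in (\<Sum>i<length ys - 1. \<bar>ys ! Suc i - ys ! i\<bar>))"

definition sort_cost :: "online_alg \<Rightarrow> real list \<Rightarrow> real" where
  "sort_cost A s = path_cost (arrangement A s)"

end

theory Submission
  imports Defs "HOL-Real_Asymp.Real_Asymp"
begin

(* The array is viewed as a complete t-ary tree of depth d with t^d <= (1 + eps) n leaves, and the
   position of each real is chosen one base-t digit at a time. The reals sharing the first l digits
   lie in one closed k-adic cell of width k^-l; the next digit separates them by their k-adic cell
   of width k^-(l+1) and, in arrival order, into blocks of T^(d-l-1) reals, the blocks receiving
   digits in the order in which they are opened. As at most T^(d-l) reals share l digits, at most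
   T + (k + 1) <= t blocks are opened, so every real finds room, and each digit depends only on the
   reals seen so far.

   Reals whose positions share l leading digits are within k^-l of each other, so a left-to-right
   scan pays at most k^-l whenever it passes from one block of level l + 1 to the next, which
   happens fewer than t^(l+1) times: the cost is at most 2 + sum_{l<d} t^(l+1) / k^l. Taking
   d ~ sqrt (log n / log log n), T = ceil (n^(1/d)) and k ~ eps T / (4 d), the space is at most
   (1 + eps / (2 d))^d n <= (1 + eps) n, while t / k = O(d / eps) makes the cost
   2^O(sqrt (log n log log n)). *)

definition prior_count :: "(nat \<Rightarrow> 'a) \<Rightarrow> nat \<Rightarrow> nat" where
  "prior_count f i = card {j. j < i \<and> f j = f i}"

lemma prior_count_cong: "(\<And>j. j \<le> i \<Longrightarrow> f j = g j) \<Longrightarrow> prior_count f i = prior_count g i"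
  unfolding prior_count_def by (metis (mono_tags, lifting) less_imp_le order_refl)

lemma card_prefix_strict_mono:
  assumes "i < (j::nat)" "P i"
  shows "card {l. l < i \<and> P l} < card {l. l < j \<and> P l}"
proof (rule psubset_card_mono)
  show "finite {l. l < j \<and> P l}" by simp
  show "{l. l < i \<and> P l} \<subset> {l. l < j \<and> P l}" using assms by auto
qed

lemma prior_count_less:
  assumes "i < n" shows "prior_count f i < card {j. j < n \<and> f j = f i}"
  unfolding prior_count_def using assms by (rule card_prefix_strict_mono) simp

lemma inj_on_prior_count: "inj_on (prior_count f) {i. f i = v}"
proof (rule inj_onI)
  have less: "prior_count f i < prior_count f j" if "i < j" "f i = v" "f j = v" for i j
    unfolding prior_count_def using card_prefix_strict_mono[of i j "\<lambda>l. f l = v"] that by simp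
  fix i j assume "i \<in> {i. f i = v}" "j \<in> {i. f i = v}" "prior_count f i = prior_count f j"
  then show "i = j" using less[of i j] less[of j i] by (cases i j rule: linorder_cases) auto
qed

lemma nth_filter_upt_card:
  assumes "P i" "i < n"
  shows "card {j. j < i \<and> P j} < length (filter P [0..<n])
    \<and> filter P [0..<n] ! card {j. j < i \<and> P j} = i"
  using assms(2)
proof (induction n)
  case (Suc n)
  have len: "length (filter P [0..<n]) = card {j. j < n \<and> P j}"
    by (simp add: length_filter_conv_card cong: conj_cong)
  show ?case
  proof (cases "i < n")
    case True
    then show ?thesis using Suc.IH by (simp add: nth_append)
  next
    case False
    then have "i = n" using Suc.prems by simp
    then show ?thesis using len assms(1) by (simp add: nth_append)
  qed
qed simp

definition first_index :: "(nat \<Rightarrow> 'a) \<Rightarrow> nat \<Rightarrow> nat" where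
  "first_index f i = (LEAST j. f j = f i)"

definition arrival_rank :: "(nat \<Rightarrow> 'a) \<Rightarrow> nat \<Rightarrow> nat" where
  "arrival_rank f i = card (f ` {..<first_index f i})"

lemma first_index_le: "first_index f i \<le> i"
  unfolding first_index_def by (rule Least_le) simp

lemma first_index_eq: "f (first_index f i) = f i"
  unfolding first_index_def by (rule LeastI[of _ i]) simp

lemma not_in_image_before_first_index: "f i \<notin> f ` {..<first_index f i}"
  unfolding first_index_def using not_less_Least by fastforce

lemma first_index_cong:
  assumes "\<And>j. j \<le> i \<Longrightarrow> f j = g j"
  shows "first_index f i = first_index g i"
proof (rule antisym)
  show "first_index g i \<le> first_index f i"
    unfolding first_index_def[of g] using first_index_eq[of f i] first_index_le[of f i] assms
    by (intro Least_le) (metis order_refl)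
  show "first_index f i \<le> first_index g i"
    unfolding first_index_def[of f] using first_index_eq[of g i] first_index_le[of g i] assms
    by (intro Least_le) (metis order_refl)
qed

lemma arrival_rank_cong:
  assumes "\<And>j. j \<le> i \<Longrightarrow> f j = g j"
  shows "arrival_rank f i = arrival_rank g i"
proof -
  have "first_index f i = first_index g i" by (rule first_index_cong) (use assms in auto)
  moreover have "f ` {..<first_index f i} = g ` {..<first_index f i}"
    using assms first_index_le[of f i] by (intro image_cong) auto
  ultimately show ?thesis unfolding arrival_rank_def by simp
qed

lemma arrival_rank_less:
  assumes "first_index f i < m" shows "arrival_rank f i < card (f ` {..<m})"
  unfolding arrival_rank_def
proof (rule psubset_card_mono)
  have "f i \<in> f ` {..<m}" using assms first_index_eq[of f i] by (metis image_eqI lessThan_iff)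
  then show "f ` {..<first_index f i} \<subset> f ` {..<m}"
    using assms not_in_image_before_first_index[of f i] by fastforce
qed simp

lemma arrival_rank_less_card: "i < n \<Longrightarrow> arrival_rank f i < card (f ` {..<n})"
  using first_index_le[of f i] by (intro arrival_rank_less) simp

lemma arrival_rank_eq_iff: "arrival_rank f i = arrival_rank f j \<longleftrightarrow> f i = f j"
proof
  assume eq: "arrival_rank f i = arrival_rank f j"
  have "first_index f i = first_index f j"
  proof (rule ccontr)
    assume "first_index f i \<noteq> first_index f j"
    then show False
      using eq arrival_rank_less[of f i "first_index f j"] arrival_rank_less[of f j "first_index f i"]
      unfolding arrival_rank_def[of f i] arrival_rank_def[of f j] by (metis less_irrefl linorder_neqE_nat)
  qed
  then show "f i = f j" by (metis first_index_eq)
qed (simp add: arrival_rank_def first_index_def)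

definition cell :: "nat \<Rightarrow> nat \<Rightarrow> real \<Rightarrow> int" where
  "cell k l x = \<lfloor>x * real k ^ l\<rfloor>"

(* Cells are closed, so a cell of level l meets k + 1 (not k) cells of level l + 1. *)
definition in_cell :: "nat \<Rightarrow> nat \<Rightarrow> int \<Rightarrow> real \<Rightarrow> bool" where
  "in_cell k l a x \<longleftrightarrow> a \<le> x * real k ^ l \<and> x * real k ^ l \<le> a + 1"

lemma in_cell_cell: "in_cell k l (cell k l x) x"
  unfolding in_cell_def cell_def by linarith

lemma cell_Suc_bounds:
  assumes "in_cell k l a x"
  shows "a * int k \<le> cell k (Suc l) x \<and> cell k (Suc l) x \<le> a * int k + int k"
proof -
  have "real_of_int a * real k \<le> (x * real k ^ l) * real k"
    "(x * real k ^ l) * real k \<le> (real_of_int a + 1) * real k"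
    using assms unfolding in_cell_def by (auto intro: mult_right_mono)
  then have "real_of_int (a * int k) \<le> x * real k ^ Suc l"
    "x * real k ^ Suc l \<le> real_of_int (a * int k + int k)"
    by (simp_all add: algebra_simps)
  then show ?thesis unfolding cell_def by (metis floor_mono floor_of_int le_floor_iff)
qed

lemma dist_le_in_same_cell:
  assumes "k \<ge> 1" "in_cell k l a x" "in_cell k l a y"
  shows "\<bar>x - y\<bar> \<le> 1 / real k ^ l"
proof -
  have "\<bar>x - y\<bar> * real k ^ l = \<bar>x * real k ^ l - y * real k ^ l\<bar>"
    by (simp add: abs_mult flip: left_diff_distrib)
  then have "\<bar>x - y\<bar> * real k ^ l \<le> 1"
    using assms(2,3) unfolding in_cell_def by linarith
  then show ?thesis using assms(1) by (simp add: pos_le_divide_eq)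
qed

definition block_label :: "nat \<Rightarrow> nat \<Rightarrow> nat \<Rightarrow> real list \<Rightarrow> nat \<Rightarrow> int \<times> nat" where
  "block_label k l cap xs i =
     (cell k (Suc l) (xs ! i), prior_count (\<lambda>j. cell k (Suc l) (xs ! j)) i div cap)"

lemma card_same_block_le:
  assumes "cap > 0"
  shows "card {j. j < n \<and> (c j, prior_count c j div cap) = (c i, prior_count c i div cap)} \<le> cap"
proof -
  let ?S = "{j. j < n \<and> (c j, prior_count c j div cap) = (c i, prior_count c i div cap)}"
  let ?q = "prior_count c i div cap"
  have "inj_on (prior_count c) ?S" by (rule inj_on_subset[OF inj_on_prior_count[of c "c i"]]) auto
  moreover have "prior_count c ` ?S \<subseteq> {?q * cap..<?q * cap + cap}"
  proof
    fix x assume "x \<in> prior_count c ` ?S"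
    then have "x div cap = ?q" by auto
    then show "x \<in> {?q * cap..<?q * cap + cap}"
      using div_mult_mod_eq[of x cap] mod_less_divisor[OF assms, of x] by auto
  qed
  ultimately have "card ?S \<le> card {?q * cap..<?q * cap + cap}" by (intro card_inj_on_le) auto
  then show ?thesis by simp
qed

lemma card_block_labels:
  assumes "cap > 0" "n \<le> T * cap"
  shows "card ((\<lambda>j. (c j, prior_count c j div cap)) ` {..<n}) \<le> T + card (c ` {..<n})"
proof -
  define K where "K = c ` {..<n}"
  define S where "S b = {j. j < n \<and> c j = b}" for b
  have "(\<lambda>j. (c j, prior_count c j div cap)) ` {..<n} \<subseteq> Sigma K (\<lambda>b. {..card (S b) div cap})"
    using prior_count_less[of _ n c] by (auto simp: K_def S_def intro: div_le_mono less_imp_le)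
  then have "card ((\<lambda>j. (c j, prior_count c j div cap)) ` {..<n}) \<le> (\<Sum>b\<in>K. card (S b) div cap + 1)"
    using card_mono[of "Sigma K (\<lambda>b. {..card (S b) div cap})"] by (simp add: card_SigmaI K_def)
  moreover have "(\<Sum>b\<in>K. card (S b) div cap) \<le> T"
  proof -
    have "(\<Sum>b\<in>K. card (S b)) = n"
    proof -
      have "card (\<Union>b\<in>K. S b) = (\<Sum>b\<in>K. card (S b))"
        by (rule card_UN_disjoint) (auto simp: K_def S_def)
      moreover have "(\<Union>b\<in>K. S b) = {..<n}" by (auto simp: K_def S_def)
      ultimately show ?thesis by simp
    qed
    then have "(\<Sum>b\<in>K. card (S b) div cap) * cap \<le> T * cap"
      using assms(2) sum_mono[of K "\<lambda>b. card (S b) div cap * cap" "\<lambda>b. card (S b)"]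
      by (simp add: sum_distrib_right)
    then show ?thesis using assms(1) by simp
  qed
  ultimately show ?thesis by (simp add: sum_Suc K_def)
qed

definition block_items :: "(nat \<Rightarrow> 'a) \<Rightarrow> 'b list \<Rightarrow> nat \<Rightarrow> 'b list" where
  "block_items f xs i = map ((!) xs) (filter (\<lambda>j. f j = f i) [0..<length xs])"

lemma length_block_items: "length (block_items f xs i) = card {j. j < length xs \<and> f j = f i}"
  unfolding block_items_def by (simp add: length_filter_conv_card cong: conj_cong)

lemma block_items_nth:
  "i < length xs \<Longrightarrow>
    prior_count f i < length (block_items f xs i) \<and> block_items f xs i ! prior_count f i = xs ! i"
  using nth_filter_upt_card[of "\<lambda>j. f j = f i" i "length xs"]
  unfolding block_items_def prior_count_def by simp

lemma block_items_cong: "f i = f j \<Longrightarrow> block_items f xs i = block_items f xs j"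
  unfolding block_items_def by simp

primrec position :: "nat \<Rightarrow> nat \<Rightarrow> nat \<Rightarrow> nat \<Rightarrow> nat \<Rightarrow> real list \<Rightarrow> nat \<Rightarrow> nat" where
  "position t k T 0 l xs i = 0"
| "position t k T (Suc r) l xs i =
     (let f = block_label k l (T ^ r) xs
      in arrival_rank f i * t ^ r + position t k T r (Suc l) (block_items f xs i) (prior_count f i))"

lemma block_label_take: "j < m \<Longrightarrow> block_label k l cap (take m xs) j = block_label k l cap xs j"
  unfolding block_label_def
  using prior_count_cong[of j "\<lambda>j. cell k (Suc l) (take m xs ! j)" "\<lambda>j. cell k (Suc l) (xs ! j)"]
  by simp

lemma position_take:
  "i < m \<Longrightarrow> m \<le> length xs \<Longrightarrow> position t k T r l (take m xs) i = position t k T r l xs i"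
proof (induction r arbitrary: l xs i m)
  case (Suc r)
  define f where "f = block_label k l (T ^ r) xs"
  define f' where "f' = block_label k l (T ^ r) (take m xs)"
  have ff: "f' j = f j" if "j < m" for j unfolding f_def f'_def using that by (rule block_label_take)
  have arrival: "arrival_rank f' i = arrival_rank f i"
    by (rule arrival_rank_cong) (use ff Suc.prems in auto)
  have prior: "prior_count f' i = prior_count f i"
    by (rule prior_count_cong) (use ff Suc.prems in auto)
  define idx where "idx = filter (\<lambda>j. f j = f i) [0..<m]"
  define sub where "sub = block_items f xs i"
  have idx_eq: "filter (\<lambda>j. f' j = f' i) [0..<length (take m xs)] = idx"
    unfolding idx_def using Suc.prems ff by (auto intro!: filter_cong simp: min_def)
  have upt: "[0..<length xs] = [0..<m] @ [m..<length xs]"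
    using Suc.prems upt_add_eq_append[of 0 m "length xs - m"] by simp
  have sub_take: "block_items f' (take m xs) i = take (length idx) sub"
    unfolding sub_def block_items_def idx_eq[unfolded idx_def] idx_def upt by (auto intro!: map_cong)
  have "prior_count f i < length idx"
    unfolding idx_def prior_count_def using nth_filter_upt_card[of "\<lambda>j. f j = f i" i m] Suc.prems by simp
  moreover have "length idx \<le> length sub" unfolding sub_def block_items_def idx_def upt by simp
  ultimately have "position t k T r (Suc l) (take (length idx) sub) (prior_count f i)
      = position t k T r (Suc l) sub (prior_count f i)"
    by (rule Suc.IH)
  then show ?case
    using arrival prior sub_take by (simp add: Let_def f_def f'_def sub_def)
qed simp

lemma mult_power_add_div_eq_iff:
  fixes t :: nat
  assumes "t > 0" "b < t ^ r" "b' < t ^ r" "m \<le> r"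
  shows "(a * t ^ r + b) div t ^ (r - m) = (a' * t ^ r + b') div t ^ (r - m)
    \<longleftrightarrow> a = a' \<and> b div t ^ (r - m) = b' div t ^ (r - m)"
proof -
  define B where "B = t ^ (r - m)"
  have B: "B > 0" unfolding B_def using assms(1) by simp
  have tr: "t ^ r = t ^ m * B" unfolding B_def using assms(4) by (simp flip: power_add)
  have "(x * t ^ r + y) div B = y div B + x * t ^ m" for x y
  proof -
    have "(x * t ^ r + y) div B = (y + x * t ^ m * B) div B" by (simp add: tr algebra_simps)
    also have "\<dots> = y div B + x * t ^ m" using B by simp
    finally show ?thesis .
  qed
  moreover have "y div B < t ^ m" if "y < t ^ r" for y
    using that unfolding tr by (simp add: less_mult_imp_div_less)
  moreover have "x * t ^ m + u = x' * t ^ m + u' \<longleftrightarrow> x = x' \<and> u = u'"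
    if "u < t ^ m" "u' < t ^ m" for x x' u u' :: nat
  proof
    assume eq: "x * t ^ m + u = x' * t ^ m + u'"
    have "x = (x * t ^ m + u) div t ^ m" "x' = (x' * t ^ m + u') div t ^ m"
      using that assms(1) by (simp_all add: add.commute[of "_ * t ^ m"])
    then show "x = x' \<and> u = u'" using eq by simp
  qed simp
  ultimately show ?thesis using assms(2,3) unfolding B_def[symmetric] by (metis add.commute)
qed

(* Positions are read as r-digit base-t numbers, p i div t ^ (r - m) being the first m digits. *)
definition nested_layout :: "nat \<Rightarrow> nat \<Rightarrow> nat \<Rightarrow> nat \<Rightarrow> real list \<Rightarrow> (nat \<Rightarrow> nat) \<Rightarrow> bool" where
  "nested_layout t k r l xs p \<longleftrightarrow>
     (\<forall>i<length xs. p i < t ^ r) \<and> inj_on p {..<length xs} \<and>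
     (\<forall>i<length xs. \<forall>j<length xs. \<forall>m\<le>r.
        p i div t ^ (r - m) = p j div t ^ (r - m) \<longrightarrow> \<bar>xs ! i - xs ! j\<bar> \<le> 1 / real k ^ (l + m))"

lemma nested_layoutD:
  assumes "nested_layout t k r l xs p"
  shows "i < length xs \<Longrightarrow> p i < t ^ r"
    and "inj_on p {..<length xs}"
    and "i < length xs \<Longrightarrow> j < length xs \<Longrightarrow> m \<le> r \<Longrightarrow> p i div t ^ (r - m) = p j div t ^ (r - m)
      \<Longrightarrow> \<bar>xs ! i - xs ! j\<bar> \<le> 1 / real k ^ (l + m)"
  using assms unfolding nested_layout_def by blast+

lemma block_position_less:
  assumes "\<And>i. i < length xs \<Longrightarrow> nested_layout t k r l' (block_items f xs i) (q (block_items f xs i))"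
    and "i < length xs"
  shows "q (block_items f xs i) (prior_count f i) < t ^ r"
  using nested_layoutD(1)[OF assms(1)[OF assms(2)]] block_items_nth[OF assms(2)] by blast

lemma block_position_div_eq_iff:
  assumes "\<And>i. i < length xs \<Longrightarrow> nested_layout t k r l' (block_items f xs i) (q (block_items f xs i))"
    and "t > 0" "i < length xs" "j < length xs" "m \<le> r"
  shows "(arrival_rank f i * t ^ r + q (block_items f xs i) (prior_count f i)) div t ^ (r - m)
      = (arrival_rank f j * t ^ r + q (block_items f xs j) (prior_count f j)) div t ^ (r - m)
    \<longleftrightarrow> f i = f j \<and> q (block_items f xs i) (prior_count f i) div t ^ (r - m)
      = q (block_items f xs i) (prior_count f j) div t ^ (r - m)"
  using mult_power_add_div_eq_iff[OF assms(2) block_position_less[OF assms(1,3)]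
      block_position_less[OF assms(1,4)] assms(5)]
  by (auto simp: arrival_rank_eq_iff dest: block_items_cong[of _ i j xs])

lemma inj_on_block_positions:
  assumes blocks: "\<And>i. i < length xs \<Longrightarrow> nested_layout t k r l' (block_items f xs i) (q (block_items f xs i))"
    and t: "t > 0"
  shows "inj_on (\<lambda>i. arrival_rank f i * t ^ r + q (block_items f xs i) (prior_count f i)) {..<length xs}"
proof (rule inj_onI)
  fix i j assume "i \<in> {..<length xs}" "j \<in> {..<length xs}"
    and eq: "arrival_rank f i * t ^ r + q (block_items f xs i) (prior_count f i)
      = arrival_rank f j * t ^ r + q (block_items f xs j) (prior_count f j)"
  then have ij: "i < length xs" "j < length xs" by simp_all
  then have same: "f i = f j"
    and "q (block_items f xs i) (prior_count f i) = q (block_items f xs i) (prior_count f j)"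
    using block_position_div_eq_iff[OF blocks t ij, of r] eq by auto
  moreover have "prior_count f i < length (block_items f xs i)" "prior_count f j < length (block_items f xs i)"
    using block_items_nth[OF ij(1), of f] block_items_nth[OF ij(2), of f] block_items_cong[OF same, of xs]
    by auto
  ultimately have "prior_count f i = prior_count f j"
    using inj_onD[OF nested_layoutD(2)[OF blocks]] ij by (metis lessThan_iff)
  then show "i = j" using inj_onD[OF inj_on_prior_count[of f "f i"]] same by simp
qed

lemma block_positions_close:
  assumes k: "k \<ge> 1" and t: "t > 0"
    and blocks: "\<And>i. i < length xs \<Longrightarrow> nested_layout t k r (Suc l) (block_items f xs i) (q (block_items f xs i))"
    and cell: "\<forall>x\<in>set xs. in_cell k l a x"
    and ij: "i < length xs" "j < length xs" and m: "m \<le> Suc r"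
    and eq: "(arrival_rank f i * t ^ r + q (block_items f xs i) (prior_count f i)) div t ^ (Suc r - m)
      = (arrival_rank f j * t ^ r + q (block_items f xs j) (prior_count f j)) div t ^ (Suc r - m)"
  shows "\<bar>xs ! i - xs ! j\<bar> \<le> 1 / real k ^ (l + m)"
proof (cases m)
  case 0
  have "in_cell k l a (xs ! i)" "in_cell k l a (xs ! j)" using cell ij by simp_all
  then show ?thesis using dist_le_in_same_cell[OF k] 0 by simp
next
  case (Suc m')
  let ?sub = "block_items f xs i"
  have same: "f i = f j"
    and "q ?sub (prior_count f i) div t ^ (r - m') = q ?sub (prior_count f j) div t ^ (r - m')"
    using block_position_div_eq_iff[OF blocks t ij, of m'] eq m Suc by auto
  moreover have "prior_count f i < length ?sub" "prior_count f j < length ?sub"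
    using block_items_nth[OF ij(1), of f] block_items_nth[OF ij(2), of f] block_items_cong[OF same, of xs]
    by auto
  ultimately have "\<bar>?sub ! prior_count f i - ?sub ! prior_count f j\<bar> \<le> 1 / real k ^ (Suc l + m')"
    using m Suc ij by (intro nested_layoutD(3)[OF blocks]) auto
  then show ?thesis
    using block_items_cong[OF same, of xs] block_items_nth[OF ij(1), of f] block_items_nth[OF ij(2), of f] Suc
    by simp
qed

lemma nested_layout_Suc:
  assumes k: "k \<ge> 1" and t: "t > 0" and rank: "\<And>i. i < length xs \<Longrightarrow> arrival_rank f i < t"
    and blocks: "\<And>i. i < length xs \<Longrightarrow> nested_layout t k r (Suc l) (block_items f xs i) (q (block_items f xs i))"
    and cell: "\<forall>x\<in>set xs. in_cell k l a x"
  shows "nested_layout t k (Suc r) l xs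
    (\<lambda>i. arrival_rank f i * t ^ r + q (block_items f xs i) (prior_count f i))"
proof -
  have "arrival_rank f i * t ^ r + q (block_items f xs i) (prior_count f i) < t ^ Suc r"
    if "i < length xs" for i
  proof -
    have "arrival_rank f i * t ^ r + q (block_items f xs i) (prior_count f i) < (arrival_rank f i + 1) * t ^ r"
      using block_position_less[OF blocks that] by simp
    also have "\<dots> \<le> t * t ^ r" using rank[OF that] by (intro mult_right_mono) simp_all
    finally show ?thesis by simp
  qed
  then show ?thesis
    using inj_on_block_positions[OF blocks t] block_positions_close[OF k t blocks cell]
    unfolding nested_layout_def by blast
qed

lemma position_layout:
  assumes k: "k \<ge> 1" and T: "T \<ge> 1" and t: "T + k + 1 \<le> t"
  shows "length xs \<le> T ^ r \<Longrightarrow> \<forall>x\<in>set xs. in_cell k l a x \<Longrightarrow>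
    nested_layout t k r l xs (position t k T r l xs)"
proof (induction r arbitrary: l xs a)
  case 0
  then have ij: "i = j" if "i < length xs" "j < length xs" for i j using that by simp
  show ?case unfolding nested_layout_def
  proof (intro conjI allI impI)
    show "inj_on (position t k T 0 l xs) {..<length xs}" using ij by (auto simp: inj_on_def)
    fix i j m assume "i < length xs" "j < length xs"
    then have "i = j" by (rule ij)
    then show "\<bar>xs ! i - xs ! j\<bar> \<le> 1 / real k ^ (l + m)" by simp
  qed simp
next
  case (Suc r)
  define c where "c j = cell k (Suc l) (xs ! j)" for j
  define f where "f = block_label k l (T ^ r) xs"
  have f_eq: "f = (\<lambda>j. (c j, prior_count c j div T ^ r))"
    unfolding f_def c_def block_label_def by (simp add: fun_eq_iff)
  have "arrival_rank f i < t" if "i < length xs" for i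
  proof -
    have "c j \<in> {a * int k..a * int k + int k}" if "j < length xs" for j
      using cell_Suc_bounds[of k l a "xs ! j"] Suc.prems(2) that unfolding c_def by simp
    then have "card (c ` {..<length xs}) \<le> card {a * int k..a * int k + int k}"
      by (intro card_mono) auto
    moreover have "card (f ` {..<length xs}) \<le> T + card (c ` {..<length xs})"
      unfolding f_eq using T Suc.prems(1) by (intro card_block_labels) simp_all
    ultimately show ?thesis using arrival_rank_less_card[OF that, of f] t by simp
  qed
  moreover have "nested_layout t k r (Suc l) (block_items f xs i)
      (position t k T r (Suc l) (block_items f xs i))" for i
  proof (rule Suc.IH)
    show "length (block_items f xs i) \<le> T ^ r"
      unfolding length_block_items f_eq using T by (intro card_same_block_le) simp
    show "\<forall>x\<in>set (block_items f xs i). in_cell k (Suc l) (c i) x"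
      unfolding block_items_def f_eq c_def by auto (metis in_cell_cell)
  qed
  ultimately show ?case
    using nested_layout_Suc[OF k, of t xs f] t Suc.prems(2) by (simp add: Let_def f_def)
qed

fun path_length :: "real list \<Rightarrow> real" where
  "path_length (x # y # zs) = \<bar>y - x\<bar> + path_length (y # zs)"
| "path_length _ = 0"

lemma sum_adjacent_dist_eq_path_length:
  "(\<Sum>i<length ys - 1. \<bar>ys ! Suc i - ys ! i\<bar>) = path_length ys"
proof (induction ys rule: path_length.induct)
  case (1 x y zs)
  then show ?case by (simp add: sum.lessThan_Suc_shift del: sum.lessThan_Suc)
qed simp_all

lemma path_cost_eq_path_length: "path_cost r = path_length (0 # r @ [1])"
  unfolding path_cost_def Let_def by (rule sum_adjacent_dist_eq_path_length)

lemma path_length_Cons: "ws \<noteq> [] \<Longrightarrow> path_length (x # ws) = \<bar>hd ws - x\<bar> + path_length ws"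
  by (cases ws) auto

lemma path_length_snoc: "ws \<noteq> [] \<Longrightarrow> path_length (ws @ [y]) = path_length ws + \<bar>y - last ws\<bar>"
  by (induction ws rule: path_length.induct) auto

definition block_at :: "nat \<Rightarrow> nat \<Rightarrow> nat \<Rightarrow> nat \<Rightarrow> nat" where
  "block_at t d l p = p div t ^ (d - Suc l)"

definition prefix_close :: "nat \<Rightarrow> nat \<Rightarrow> nat \<Rightarrow> (nat \<times> real) set \<Rightarrow> bool" where
  "prefix_close t k d S \<longleftrightarrow> (\<forall>a\<in>S. \<forall>b\<in>S. \<forall>l\<le>d.
     fst a div t ^ (d - l) = fst b div t ^ (d - l) \<longrightarrow> \<bar>snd a - snd b\<bar> \<le> 1 / real k ^ l)"

lemma dist_le_sum_block_changes:
  assumes close: "prefix_close t k d S" and "a \<in> S" "b \<in> S"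
    and "fst a < fst b" "fst a < t ^ d" "fst b < t ^ d"
  shows "\<bar>snd b - snd a\<bar>
    \<le> (\<Sum>l<d. (if block_at t d l (fst a) = block_at t d l (fst b) then 0 else 1) / real k ^ l)"
proof -
  define Q where "Q l \<longleftrightarrow> fst a div t ^ (d - l) = fst b div t ^ (d - l)" for l
  have "Q 0" unfolding Q_def using assms(5,6) by simp
  moreover have "\<not> Q d" unfolding Q_def using assms(4) by simp
  ultimately obtain l where l: "l < d" "Q l" "\<not> Q (Suc l)"
    using ex_least_nat_less[of "\<lambda>l. \<not> Q l" d] by auto
  have "\<bar>snd b - snd a\<bar> \<le> 1 / real k ^ l"
    using close assms(2,3) l(1,2) unfolding prefix_close_def Q_def by (metis abs_minus_commute less_imp_le)
  also have "\<dots> = (if block_at t d l (fst a) = block_at t d l (fst b) then 0 else 1) / real k ^ l"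
    using l(3) unfolding Q_def block_at_def by simp
  also have "\<dots> \<le> (\<Sum>l<d. (if block_at t d l (fst a) = block_at t d l (fst b) then 0 else 1) / real k ^ l)"
    by (rule member_le_sum) (use l(1) in auto)
  finally show ?thesis .
qed

lemma card_blocks_Cons:
  assumes "sorted_wrt (\<lambda>a b. fst a < fst b) (z # z' # zs)"
  shows "real (card (block_at t d l ` fst ` set (z # z' # zs)))
    = (if block_at t d l (fst z) = block_at t d l (fst z') then 0 else 1)
      + real (card (block_at t d l ` fst ` set (z' # zs)))"
proof (cases "block_at t d l (fst z) = block_at t d l (fst z')")
  case False
  have "block_at t d l (fst z) < block_at t d l (fst w)" if "w \<in> set (z' # zs)" for w
  proof -
    have "block_at t d l (fst z) \<le> block_at t d l (fst z')" "block_at t d l (fst z') \<le> block_at t d l (fst w)"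
      using assms that unfolding block_at_def by (auto intro: div_le_mono less_imp_le)
    then show ?thesis using False by linarith
  qed
  then have "block_at t d l (fst z) \<notin> block_at t d l ` fst ` set (z' # zs)" by fastforce
  then show ?thesis using False by simp
qed (simp add: insert_absorb)

lemma path_length_le_block_changes:
  assumes "sorted_wrt (\<lambda>a b. fst a < fst b) zs" "\<forall>z\<in>set zs. fst z < t ^ d"
    "prefix_close t k d (set zs)" "zs \<noteq> []"
  shows "path_length (map snd zs) \<le> (\<Sum>l<d. (real (card (block_at t d l ` fst ` set zs)) - 1) / real k ^ l)"
  using assms
proof (induction zs rule: induct_list012)
  case (3 z z' zs)
  have "prefix_close t k d (set (z' # zs))" using "3.prems"(3) unfolding prefix_close_def by auto
  then have IH: "path_length (map snd (z' # zs))
      \<le> (\<Sum>l<d. (real (card (block_at t d l ` fst ` set (z' # zs))) - 1) / real k ^ l)"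
    using "3.IH"(2) "3.prems"(1,2) by simp
  have "\<bar>snd z' - snd z\<bar>
      \<le> (\<Sum>l<d. (if block_at t d l (fst z) = block_at t d l (fst z') then 0 else 1) / real k ^ l)"
    using "3.prems" by (intro dist_le_sum_block_changes) auto
  with IH have "path_length (map snd (z # z' # zs)) \<le> (\<Sum>l<d.
      ((if block_at t d l (fst z) = block_at t d l (fst z') then 0 else 1)
       + (real (card (block_at t d l ` fst ` set (z' # zs))) - 1)) / real k ^ l)"
    by (simp add: add_divide_distrib sum.distrib)
  then show ?case using card_blocks_Cons[OF "3.prems"(1)] by (simp add: algebra_simps)
qed simp_all

lemma card_blocks_le:
  assumes "\<forall>p\<in>P. p < t ^ d" "l < d"
  shows "card (block_at t d l ` P) \<le> t ^ Suc l"
proof -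
  have "t ^ d = t ^ Suc l * t ^ (d - Suc l)" using assms(2) by (metis Suc_leI le_add_diff_inverse power_add)
  then have "block_at t d l ` P \<subseteq> {..<t ^ Suc l}"
    using assms(1) unfolding block_at_def by (auto simp: less_mult_imp_div_less)
  then show ?thesis by (metis card_lessThan card_mono finite_lessThan)
qed

lemma path_cost_le:
  assumes sorted: "sorted_wrt (\<lambda>a b. fst a < fst b) zs"
    and range: "\<forall>z\<in>set zs. fst z < t ^ d \<and> 0 \<le> snd z \<and> snd z \<le> 1"
    and close: "prefix_close t k d (set zs)"
  shows "path_cost (map snd zs) \<le> 2 + (\<Sum>l<d. real t ^ Suc l / real k ^ l)"
proof (cases "zs = []")
  case True
  have "0 \<le> (\<Sum>l<d. real t ^ Suc l / real k ^ l)" by (intro sum_nonneg) simp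
  then show ?thesis using True by (simp add: path_cost_eq_path_length)
next
  case False
  let ?ws = "map snd zs"
  have "path_length ?ws \<le> (\<Sum>l<d. (real (card (block_at t d l ` fst ` set zs)) - 1) / real k ^ l)"
    using assms False by (intro path_length_le_block_changes) auto
  also have "\<dots> \<le> (\<Sum>l<d. real t ^ Suc l / real k ^ l)"
  proof (intro sum_mono divide_right_mono)
    fix l assume "l \<in> {..<d}"
    then have "card (block_at t d l ` fst ` set zs) \<le> t ^ Suc l"
      using range by (intro card_blocks_le) auto
    then have "real (card (block_at t d l ` fst ` set zs)) \<le> real (t ^ Suc l)"
      by (simp only: of_nat_le_iff)
    then show "real (card (block_at t d l ` fst ` set zs)) - 1 \<le> real t ^ Suc l" by simp
  qed simp
  finally have "path_length ?ws \<le> (\<Sum>l<d. real t ^ Suc l / real k ^ l)" .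
  moreover have "\<bar>hd ?ws\<bar> \<le> 1" "\<bar>1 - last ?ws\<bar> \<le> 1"
    using range hd_in_set[OF False] last_in_set[OF False] False by (simp_all add: hd_map last_map)
  moreover have "path_cost ?ws = \<bar>hd ?ws\<bar> + path_length ?ws + \<bar>1 - last ?ws\<bar>"
    using False by (simp add: path_cost_eq_path_length path_length_Cons path_length_snoc)
  ultimately show ?thesis by linarith
qed

definition nested_sorter :: "nat \<Rightarrow> nat \<Rightarrow> nat \<Rightarrow> nat \<Rightarrow> online_alg" where
  "nested_sorter t k T d ys = position t k T d 0 ys (length ys - 1)"

lemma placement_nested_sorter:
  "placement (nested_sorter t k T d) s = map (position t k T d 0 s) [0..<length s]"
  unfolding placement_def nested_sorter_def using position_take[of _ "Suc _" s] by simp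

lemma valid_run_of_layout:
  assumes "placement A s = map p [0..<length s]" "nested_layout t k d l s p" "t ^ d \<le> m"
  shows "valid_run m A s"
  using nested_layoutD[OF assms(2)] assms(1,3) unfolding valid_run_def
  by (auto simp: distinct_map atLeast0LessThan intro: order_less_le_trans)

lemma sort_cost_le_of_layout:
  assumes P: "placement A s = map p [0..<length s]" and layout: "nested_layout t k d 0 s p"
    and range: "\<forall>x\<in>set s. 0 \<le> x \<and> x \<le> 1"
  shows "sort_cost A s \<le> 2 + (\<Sum>l<d. real t ^ Suc l / real k ^ l)"
proof -
  define zs where "zs = sort_key fst (zip (placement A s) s)"
  have zs_elem: "\<exists>i<length s. z = (p i, s ! i)" if "z \<in> set zs" for z
    using that unfolding zs_def P by (auto simp: in_set_zip)
  have distinct_fst_sort: "distinct (map fst (sort_key fst xs)) \<longleftrightarrow> distinct (map fst xs)"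
    for xs :: "(nat \<times> real) list"
    by (induction xs) (simp_all add: distinct_insort_key)
  have "distinct (map p [0..<length s])"
    using nested_layoutD(2)[OF layout] by (simp add: distinct_map atLeast0LessThan)
  then have "distinct (map fst zs)" unfolding zs_def P distinct_fst_sort by simp
  then have "sorted_wrt (<) (map fst zs)" unfolding zs_def by (simp add: strict_sorted_iff)
  then have "sorted_wrt (\<lambda>a b. fst a < fst b) zs" by (simp add: sorted_wrt_map)
  moreover have "\<forall>z\<in>set zs. fst z < t ^ d \<and> 0 \<le> snd z \<and> snd z \<le> 1"
  proof
    fix z assume "z \<in> set zs"
    then obtain i where "i < length s" "z = (p i, s ! i)" using zs_elem by blast
    then show "fst z < t ^ d \<and> 0 \<le> snd z \<and> snd z \<le> 1"
      using nested_layoutD(1)[OF layout] range nth_mem by simp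
  qed
  moreover have "prefix_close t k d (set zs)"
    unfolding prefix_close_def
  proof (intro ballI allI impI)
    fix a b l assume "a \<in> set zs" "b \<in> set zs" "l \<le> d" "fst a div t ^ (d - l) = fst b div t ^ (d - l)"
    moreover obtain i j where "i < length s" "a = (p i, s ! i)" "j < length s" "b = (p j, s ! j)"
      using zs_elem \<open>a \<in> set zs\<close> \<open>b \<in> set zs\<close> by meson
    ultimately show "\<bar>snd a - snd b\<bar> \<le> 1 / real k ^ l" using nested_layoutD(3)[OF layout] by simp
  qed
  ultimately have "path_cost (map snd zs) \<le> 2 + (\<Sum>l<d. real t ^ Suc l / real k ^ l)"
    by (rule path_cost_le)
  then show ?thesis unfolding sort_cost_def arrangement_def zs_def .
qed

lemma nested_sorter_correct:
  assumes "k \<ge> 1" "T \<ge> 1" "T + k + 1 \<le> t" "length s \<le> T ^ d"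
    and range: "\<forall>x\<in>set s. 0 \<le> x \<and> x \<le> 1" and "t ^ d \<le> m"
  shows "valid_run m (nested_sorter t k T d) s
    \<and> sort_cost (nested_sorter t k T d) s \<le> 2 + (\<Sum>l<d. real t ^ Suc l / real k ^ l)"
proof -
  have "\<forall>x\<in>set s. in_cell k 0 0 x" using range unfolding in_cell_def by simp
  then have "nested_layout t k d 0 s (position t k T d 0 s)"
    using position_layout[OF assms(1-4)] by blast
  then show ?thesis
    using valid_run_of_layout sort_cost_le_of_layout placement_nested_sorter assms(6) range by blast
qed

lemma one_plus_div_power_le:
  assumes "0 \<le> e" "e \<le> 1" "d > 0"
  shows "(1 + e / (2 * real d)) ^ d \<le> 1 + e"
proof -
  have "(1 + (e / 2) / real d) ^ d \<le> exp (e / 2)"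
    by (rule exp_ge_one_plus_x_over_n_power_n) (use assms in auto)
  also have "exp (e / 2) \<le> 1 + 2 * (e / 2)"
    by (rule real_exp_bound_lemma) (use assms in auto)
  finally show ?thesis by simp
qed

lemma real_div_mult_bounds:
  fixes T M :: nat
  assumes "M > 0"
  shows "real (T div M) * real M \<le> real T" "real T < (real (T div M) + 1) * real M"
proof -
  have "T div M * M \<le> T" "T < T div M * M + M"
    using div_mult_mod_eq[of T M] mod_less_divisor[OF assms, of T] by linarith+
  then show "real (T div M) * real M \<le> real T" "real T < (real (T div M) + 1) * real M"
    by (simp_all add: distrib_right flip: of_nat_mult of_nat_add of_nat_le_iff of_nat_less_iff)
qed

lemma stretched_base_bound:
  fixes T k d e :: real
  assumes "0 < e" "0 < d" "8 * d / e + 2 \<le> T" "k \<le> T * e / (4 * d)"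
  shows "T + k + 1 \<le> (T - 1) * (1 + e / (2 * d))"
proof -
  have "8 * d \<le> (T - 2) * e" using assms(1,3) by (simp add: field_simps)
  then have "(T * e + 8 * d) / (4 * d) \<le> (2 * (T - 1) * e) / (4 * d)"
    using assms(2) by (intro divide_right_mono) (simp_all add: algebra_simps)
  moreover have "(T * e + 8 * d) / (4 * d) = T * e / (4 * d) + 2"
    "(2 * (T - 1) * e) / (4 * d) = (T - 1) * (e / (2 * d))"
    using assms(2) by (simp_all add: field_simps)
  ultimately have "k + 2 \<le> (T - 1) * (e / (2 * d))" using assms(4) by linarith
  then show ?thesis by (simp add: algebra_simps)
qed

lemma branching_bounds:
  fixes T d :: nat and e :: real
  assumes e: "0 < e" "e \<le> 1" and d: "d \<ge> 1" and T: "8 * real d / e + 2 \<le> real T"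
  defines "k \<equiv> T div nat \<lceil>4 * real d / e\<rceil>"
  shows "k \<ge> 1" "real (T + k + 1) \<le> (real T - 1) * (1 + e / (2 * real d))"
    "real (T + k + 1) \<le> 30 * real d / e * real k"
proof -
  define M where "M = nat \<lceil>4 * real d / e\<rceil>"
  have de: "real d / e \<ge> 1" using d e by (simp add: pos_le_divide_eq)
  have M: "4 * real d / e \<le> real M" "real M \<le> 4 * real d / e + 1"
    using de unfolding M_def by linarith+
  have M0: "M > 0" using M(1) de by linarith
  note kM = real_div_mult_bounds[OF M0, of T, unfolded M_def, folded k_def, folded M_def]
  show k: "k \<ge> 1"
  proof (rule ccontr)
    assume "\<not> k \<ge> 1"
    then have "k = 0" by simp
    then have "real T < real M" using kM(2) by simp
    then show False using M(2) T de by linarith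
  qed
  have "real k * (4 * real d / e) \<le> real T"
    using kM(1) M(1) by (meson mult_left_mono of_nat_0_le_iff order_trans)
  then have k_le: "real k \<le> real T * e / (4 * real d)"
    using d e by (simp add: field_simps)
  then show "real (T + k + 1) \<le> (real T - 1) * (1 + e / (2 * real d))"
    using stretched_base_bound[OF e(1) _ T, of "real k"] d by (simp add: add.assoc)
  have "(real k + 1) * real M \<le> (2 * real k) * real M" using k by (intro mult_right_mono) simp_all
  then have "real T \<le> 2 * (real M * real k)" using kM(2) by (simp add: algebra_simps)
  moreover have "real k \<le> real T" unfolding k_def by simp
  ultimately have "real (T + k + 1) \<le> 6 * (real M * real k)" using T de by simp
  also have "\<dots> \<le> 6 * ((4 * real d / e + 1) * real k)" using M(2) by (intro mult_left_mono mult_right_mono) simp_all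
  also have "\<dots> = 24 * (real d / e * real k) + 6 * real k" by (simp add: algebra_simps)
  also have "\<dots> \<le> 30 * (real d / e * real k)" using mult_right_mono[OF de, of "real k"] by simp
  also have "\<dots> = 30 * real d / e * real k" by simp
  finally show "real (T + k + 1) \<le> 30 * real d / e * real k" .
qed

lemma depth_bounds:
  fixes L :: real
  assumes L: "16 \<le> L" and growth: "L\<^sup>2 \<le> 2 powr sqrt L"
  defines "D \<equiv> sqrt (L * log 2 L)" and "d \<equiv> nat \<lceil>sqrt (L / log 2 L)\<rceil>"
  shows "d \<ge> 1" "L \<le> real d * D" "real d * D \<le> 2 * L" "log 2 L * real d \<le> 2 * D"
    "real d \<le> L" "2 * sqrt L \<le> D" "8 \<le> D"
proof -
  define A where "A = log 2 L"
  have "log 2 16 \<le> A" unfolding A_def using L by simp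
  moreover have "log 2 (16::real) = 4" using log_powr_cancel[of "2::real" 4] by simp
  ultimately have A4: "4 \<le> A" by simp
  have LL: "L \<le> L\<^sup>2" using L by (simp add: power2_eq_square)
  then have "L \<le> 2 powr sqrt L" using growth by linarith
  then have "log 2 L \<le> log 2 (2 powr sqrt L)" using L by (subst log_le_cancel_iff) simp_all
  then have AsL: "A \<le> sqrt L" unfolding A_def by simp
  have "sqrt L \<le> sqrt (L\<^sup>2)" using LL by (rule real_sqrt_le_mono)
  then have sqrtL: "sqrt L \<le> L" using L by simp
  define r where "r = sqrt (L / A)"
  have "1 \<le> L / A" using AsL sqrtL A4 by simp
  then have r1: "1 \<le> r" unfolding r_def by simp
  have "r * D = sqrt (L / A * (L * A))" unfolding r_def D_def A_def[symmetric] by (simp only: real_sqrt_mult)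
  also have "L / A * (L * A) = L\<^sup>2" using A4 by (simp add: power2_eq_square)
  finally have rD: "r * D = L" using L by simp
  have "A * r = sqrt (A\<^sup>2) * sqrt (L / A)" unfolding r_def using A4 by simp
  also have "\<dots> = sqrt (A\<^sup>2 * (L / A))" by (simp only: real_sqrt_mult)
  also have "A\<^sup>2 * (L / A) = L * A" using A4 by (simp add: power2_eq_square)
  finally have rA: "A * r = D" unfolding D_def A_def .
  have dr: "r \<le> real d" "real d \<le> 2 * r" unfolding d_def A_def[symmetric] r_def[symmetric] using r1 by linarith+
  have D0: "0 \<le> D" unfolding D_def A_def[symmetric] using L A4 by simp
  show "d \<ge> 1" using dr r1 by linarith
  show "L \<le> real d * D" using mult_right_mono[OF dr(1) D0] rD by simp
  show "real d * D \<le> 2 * L" using mult_right_mono[OF dr(2) D0] rD by simp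
  have "A * real d \<le> A * (2 * r)" using dr(2) A4 by (intro mult_left_mono) simp_all
  then show "log 2 L * real d \<le> 2 * D" using rA unfolding A_def by (simp add: mult.left_commute)
  have "r \<le> sqrt (L / 4)" unfolding r_def using A4 L by (intro real_sqrt_le_mono divide_left_mono) simp_all
  then have "r \<le> sqrt L / 2" by (simp add: real_sqrt_divide)
  then show "real d \<le> L" using dr sqrtL by linarith
  have "sqrt (4 * L) \<le> D" unfolding D_def A_def[symmetric] using A4 L by (intro real_sqrt_le_mono) simp
  then show D: "2 * sqrt L \<le> D" by (simp add: real_sqrt_mult)
  have "4 \<le> sqrt L" using L by (intro real_le_rsqrt) simp
  then show "8 \<le> D" using D by simp
qed

lemma ceiling_root_bounds:
  assumes "n \<ge> 1" "d \<ge> 1"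
  defines "T \<equiv> nat \<lceil>root d (real n)\<rceil>"
  shows "n \<le> T ^ d" "(real T - 1) ^ d < real n" "root d (real n) \<le> real T" "real T - 1 < root d (real n)"
proof -
  have root0: "root d (real n) > 0" using assms(1,2) by simp
  show T: "root d (real n) \<le> real T" "real T - 1 < root d (real n)" unfolding T_def using root0 by linarith+
  have "real n = root d (real n) ^ d" using assms(2) by simp
  also have "\<dots> \<le> real T ^ d" using T(1) root0 by (intro power_mono) simp_all
  finally show "n \<le> T ^ d" by (simp flip: of_nat_power)
  have "(real T - 1) ^ d < root d (real n) ^ d"
    using T root0 assms(2) by (intro power_strict_mono) (simp_all add: T_def)
  then show "(real T - 1) ^ d < real n" using assms(2) by simp
qed

lemma power_le_of_stretched_base:
  assumes "(real T - 1) ^ d < real n" "real t \<le> (real T - 1) * (1 + e / (2 * real d))"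
    "0 \<le> e" "e \<le> 1" "d > 0" "T \<ge> 1"
  shows "real (t ^ d) \<le> (1 + e) * real n"
proof -
  have "real (t ^ d) \<le> ((real T - 1) * (1 + e / (2 * real d))) ^ d"
    using assms(2) by (simp add: power_mono)
  also have "\<dots> = (real T - 1) ^ d * (1 + e / (2 * real d)) ^ d" by (rule power_mult_distrib)
  also have "\<dots> \<le> real n * (1 + e)"
    using assms by (intro mult_mono one_plus_div_power_le) simp_all
  finally show ?thesis by (simp add: mult.commute)
qed

lemma sum_power_ratio_le:
  assumes "0 < k" "k \<le> t"
  shows "(\<Sum>l<d. real t ^ Suc l / real k ^ l) \<le> real d * real t * (real t / real k) ^ d"
proof -
  have "(\<Sum>l<d. real t ^ Suc l / real k ^ l) = (\<Sum>l<d. real t * (real t / real k) ^ l)"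
    by (simp add: power_divide)
  also have "\<dots> \<le> (\<Sum>l<d. real t * (real t / real k) ^ d)"
    using assms by (intro sum_mono mult_left_mono power_increasing) simp_all
  finally show ?thesis by simp
qed

definition sorter_depth :: "nat \<Rightarrow> nat" where
  "sorter_depth n = nat \<lceil>sqrt (log 2 n / log 2 (log 2 n))\<rceil>"

definition sorter_capacity :: "nat \<Rightarrow> nat" where
  "sorter_capacity n = nat \<lceil>root (sorter_depth n) (real n)\<rceil>"

definition sorter_branching :: "real \<Rightarrow> nat \<Rightarrow> nat" where
  "sorter_branching e n = sorter_capacity n div nat \<lceil>4 * real (sorter_depth n) / e\<rceil>"

definition sorter :: "real \<Rightarrow> nat \<Rightarrow> online_alg" where
  "sorter e n = nested_sorter (sorter_capacity n + sorter_branching e n + 1) (sorter_branching e n)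
     (sorter_capacity n) (sorter_depth n)"

lemma cost_sum_le_powr:
  assumes "0 < k" "k \<le> t" "real d \<le> 2 powr D" "real t \<le> 6 * 2 powr D"
    "(real t / real k) ^ d \<le> 2 powr (4 * D)" "3 \<le> D"
  shows "2 + (\<Sum>l<d. real t ^ Suc l / real k ^ l) \<le> 2 powr (7 * D)"
proof -
  have "(\<Sum>l<d. real t ^ Suc l / real k ^ l) \<le> real d * real t * (real t / real k) ^ d"
    using assms(1,2) by (rule sum_power_ratio_le)
  also have "\<dots> \<le> 2 powr D * (6 * 2 powr D) * 2 powr (4 * D)"
    using assms(3-5) by (intro mult_mono) simp_all
  also have "\<dots> = 6 * 2 powr (6 * D)" by (simp flip: powr_add)
  finally have "2 + (\<Sum>l<d. real t ^ Suc l / real k ^ l) \<le> 8 * 2 powr (6 * D)"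
    using ge_one_powr_ge_zero[of 2 "6 * D"] assms(6) by simp
  also have "\<dots> = 2 powr (6 * D + 3)" by (simp add: powr_add)
  also have "\<dots> \<le> 2 powr (7 * D)" using assms(6) by (intro powr_mono) simp_all
  finally show ?thesis .
qed

lemma sorter_capacity_range:
  fixes e :: real and n :: nat
  assumes e: "0 < e" "e \<le> 1"
    and L: "16 \<le> log 2 n" "30 / e \<le> log 2 n" "(log 2 n)\<^sup>2 \<le> 2 powr sqrt (log 2 n)"
  defines "D \<equiv> sqrt (log 2 n * log 2 (log 2 n))"
  shows "8 * real (sorter_depth n) / e + 2 \<le> real (sorter_capacity n)"
    "real (sorter_capacity n) - 1 < 2 powr D" "real (sorter_depth n) \<le> 2 powr D"
proof -
  define d where "d = sorter_depth n"
  have n: "n \<ge> 1" using L(1) by (cases n) (simp_all add: log_def)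
  note depth = depth_bounds[OF L(1,3), folded sorter_depth_def D_def, folded d_def]
  note capacity = ceiling_root_bounds[OF n depth(1), unfolded d_def, folded sorter_capacity_def]
  have "root d (real n) = (2 powr log 2 n) powr (1 / real d)"
    using n depth(1) by (simp add: root_powr_inverse)
  also have "(2 powr log 2 n) powr (1 / real d) = 2 powr (log 2 n / real d)" by (simp add: powr_powr)
  finally have root: "root d (real n) = 2 powr (log 2 n / real d)" .
  have "8 * real d / e \<le> 8 * log 2 n / e" using depth(5) e by (simp add: divide_right_mono)
  also have "\<dots> \<le> (log 2 n)\<^sup>2 - 2"
  proof -
    have "30 / e * log 2 n \<le> log 2 n * log 2 n" using L(1,2) by (intro mult_right_mono) simp_all
    moreover have "16 * log 2 n \<le> log 2 n * log 2 n" using L(1) by (intro mult_right_mono) simp_all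
    moreover have "8 * log 2 n / e = 8 / 30 * (30 / e * log 2 n)" by simp
    ultimately show ?thesis using L(1) unfolding power2_eq_square by linarith
  qed
  also have "(log 2 n)\<^sup>2 \<le> 2 powr sqrt (log 2 n)" by (rule L(3))
  also have "\<dots> \<le> 2 powr (D / 2)" using depth(6) by (intro powr_mono) simp_all
  finally have small: "8 * real d / e + 2 \<le> 2 powr (D / 2)" by simp
  have "2 powr (D / 2) \<le> root d (real n)"
    unfolding root using depth(1,3) by (intro powr_mono) (simp_all add: field_simps)
  then show "8 * real (sorter_depth n) / e + 2 \<le> real (sorter_capacity n)"
    using small capacity(3) unfolding d_def by simp
  have "root d (real n) \<le> 2 powr D"
    unfolding root using depth(1,2) by (intro powr_mono) (simp_all add: field_simps)
  then show "real (sorter_capacity n) - 1 < 2 powr D" using capacity(4) unfolding d_def by simp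
  have "real d \<le> 8 * real d / e" using e mult_right_mono[of e 8 "real d"] by (simp add: field_simps)
  moreover have "2 powr (D / 2) \<le> 2 powr D" using depth(7) by (intro powr_mono) simp_all
  ultimately show "real (sorter_depth n) \<le> 2 powr D" using small unfolding d_def by linarith
qed

lemma power_le_powr_of_log_bound:
  fixes r L D :: real
  assumes "0 \<le> r" "r \<le> L\<^sup>2" "0 < L" "log 2 L * real d \<le> 2 * D"
  shows "r ^ d \<le> 2 powr (4 * D)"
proof -
  have "r ^ d \<le> (L\<^sup>2) ^ d" using assms(2,1) by (rule power_mono)
  also have "\<dots> = (2 powr log 2 L) ^ (2 * d)" using assms(3) by (simp add: power_mult)
  also have "\<dots> = 2 powr (real (2 * d) * log 2 L)" by (rule powr_power) simp
  also have "\<dots> \<le> 2 powr (4 * D)" using assms(4) by (intro powr_mono) (simp_all add: mult.commute)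
  finally show ?thesis .
qed

lemma sorter_cost_bound:
  assumes e: "0 < e" "e \<le> 1"
    and L: "16 \<le> log 2 n" "30 / e \<le> log 2 n" "(log 2 n)\<^sup>2 \<le> 2 powr sqrt (log 2 n)"
  defines "D \<equiv> sqrt (log 2 n * log 2 (log 2 n))" and "d \<equiv> sorter_depth n" and "T \<equiv> sorter_capacity n"
    and "k \<equiv> sorter_branching e n"
  shows "2 + (\<Sum>l<d. real (T + k + 1) ^ Suc l / real k ^ l) \<le> 2 powr (7 * D)"
proof (rule cost_sum_le_powr)
  have k_eq: "k = T div nat \<lceil>4 * real d / e\<rceil>" unfolding k_def T_def d_def sorter_branching_def ..
  note depth = depth_bounds[OF L(1,3), folded sorter_depth_def D_def, folded d_def]
  note range = sorter_capacity_range[OF e L, folded D_def d_def T_def]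
  note branching = branching_bounds[OF e depth(1) range(1), folded k_eq]
  show "0 < k" "k \<le> T + k + 1" using branching(1) by simp_all
  show "real d \<le> 2 powr D" by (rule range(3))
  have "real k \<le> real T" unfolding k_eq by simp
  moreover have "1 \<le> 2 powr D" using depth(7) by (intro ge_one_powr_ge_zero) simp_all
  ultimately show "real (T + k + 1) \<le> 6 * 2 powr D" using range(2) by simp
  have "real (T + k + 1) / real k \<le> 30 * real d / e"
    using branching(3) branching(1) by (simp add: pos_divide_le_eq)
  also have "\<dots> \<le> 30 * log 2 n / e" using depth(5) e by (simp add: divide_right_mono)
  also have "\<dots> \<le> (log 2 n)\<^sup>2"
    using mult_right_mono[OF L(2), of "log 2 n"] L(1) by (simp add: power2_eq_square)
  finally show "(real (T + k + 1) / real k) ^ d \<le> 2 powr (4 * D)"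
    using L(1) depth(4) by (intro power_le_powr_of_log_bound) simp_all
  show "3 \<le> D" using depth(7) by simp
qed

lemma sorter_correct:
  assumes e: "0 < e" "e \<le> 1"
    and L: "16 \<le> log 2 n" "30 / e \<le> log 2 n" "(log 2 n)\<^sup>2 \<le> 2 powr sqrt (log 2 n)"
    and s: "length s = n" "\<forall>x\<in>set s. 0 \<le> x \<and> x \<le> 1"
  shows "valid_run (nat \<lfloor>(1 + e) * real n\<rfloor>) (sorter e n) s
    \<and> sort_cost (sorter e n) s \<le> 2 powr (7 * sqrt (log 2 n * log 2 (log 2 n)))"
proof -
  define d where "d = sorter_depth n"
  define T where "T = sorter_capacity n"
  define k where "k = sorter_branching e n"
  define t where "t = T + k + 1"
  have n: "n \<ge> 1" using L(1) by (cases n) (simp_all add: log_def)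
  have k_eq: "k = T div nat \<lceil>4 * real d / e\<rceil>" unfolding k_def T_def d_def sorter_branching_def ..
  note depth = depth_bounds[OF L(1,3), folded sorter_depth_def, folded d_def]
  note capacity = ceiling_root_bounds[OF n depth(1), unfolded d_def, folded sorter_capacity_def T_def d_def]
  note range = sorter_capacity_range[OF e L, folded d_def T_def]
  note branching = branching_bounds[OF e depth(1) range(1), folded k_eq t_def]
  have "0 \<le> 8 * real d / e" using e by simp
  then have T1: "T \<ge> 1" using range(1) by simp
  have "real (t ^ d) \<le> (1 + e) * real n"
    using capacity(2) branching(2) e depth(1) T1 by (intro power_le_of_stretched_base[of T d n t e]) simp_all
  then have "t ^ d \<le> nat \<lfloor>(1 + e) * real n\<rfloor>" by (intro le_nat_floor) simp
  then have "valid_run (nat \<lfloor>(1 + e) * real n\<rfloor>) (nested_sorter t k T d) s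
      \<and> sort_cost (nested_sorter t k T d) s \<le> 2 + (\<Sum>l<d. real t ^ Suc l / real k ^ l)"
    using branching(1) T1 capacity(1) s by (intro nested_sorter_correct) (simp_all add: t_def)
  moreover have "sorter e n = nested_sorter t k T d" unfolding sorter_def t_def k_def T_def d_def ..
  ultimately show ?thesis
    using sorter_cost_bound[OF e L] unfolding t_def k_def T_def d_def by simp
qed

lemma valid_run_mono: "valid_run m A s \<Longrightarrow> m \<le> m' \<Longrightarrow> valid_run m' A s"
  unfolding valid_run_def by auto

theorem theorem4:
  fixes \<epsilon> :: real
  assumes "\<epsilon> > 0"
  shows "\<exists>C>0. \<exists>N::nat. \<exists>A :: nat \<Rightarrow> online_alg. \<forall>n\<ge>N. \<forall>s :: real list.
           length s = n \<and> (\<forall>x\<in>set s. 0 \<le> x \<and> x \<le> 1) \<longrightarrow>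
             valid_run (nat \<lfloor>(1 + \<epsilon>) * real n\<rfloor>) (A n) s \<and>
             sort_cost (A n) s \<le> 2 powr (C * sqrt (log 2 (real n) * log 2 (log 2 (real n))))"
proof -
  define e where "e = min \<epsilon> 1"
  have e: "0 < e" "e \<le> 1" "e \<le> \<epsilon>" using assms unfolding e_def by auto
  have "\<forall>\<^sub>F L in at_top. 16 \<le> L \<and> 30 / e \<le> L \<and> L\<^sup>2 \<le> 2 powr sqrt L"
    by (intro eventually_conj eventually_ge_at_top) real_asymp
  moreover have "filterlim (\<lambda>n::nat. log 2 (real n)) at_top at_top" by real_asymp
  ultimately have "\<forall>\<^sub>F n in at_top. 16 \<le> log 2 (real n) \<and> 30 / e \<le> log 2 (real n)
      \<and> (log 2 (real n))\<^sup>2 \<le> 2 powr sqrt (log 2 (real n))"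
    by (rule eventually_compose_filterlim)
  then obtain N where N: "\<And>n. N \<le> n \<Longrightarrow> 16 \<le> log 2 (real n) \<and> 30 / e \<le> log 2 (real n)
      \<and> (log 2 (real n))\<^sup>2 \<le> 2 powr sqrt (log 2 (real n))"
    unfolding eventually_at_top_linorder by blast
  have "valid_run (nat \<lfloor>(1 + \<epsilon>) * real n\<rfloor>) (sorter e n) s
      \<and> sort_cost (sorter e n) s \<le> 2 powr (7 * sqrt (log 2 (real n) * log 2 (log 2 (real n))))"
    if "N \<le> n" "length s = n" "\<forall>x\<in>set s. 0 \<le> x \<and> x \<le> 1" for n s
  proof -
    have "nat \<lfloor>(1 + e) * real n\<rfloor> \<le> nat \<lfloor>(1 + \<epsilon>) * real n\<rfloor>"
      using e by (intro nat_mono floor_mono mult_right_mono) simp_all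
    then show ?thesis using sorter_correct[OF e(1,2) _ _ _ that(2,3)] N[OF that(1)] valid_run_mono by blast
  qed
  then show ?thesis by (intro exI[of _ "7::real"] conjI exI[of _ N] exI[of _ "sorter e"]) auto
qed

end
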